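(* Let $\frac13<H<\frac12$, $T>0$, $p\in(\frac1H,\frac1{1-2H})$. Define $\gamma:\mathcal{W}^2_p\to M_3(\mathbb{R})$ by \[ \gamma(\omega)=\begin{pmatrix}T^{2H}I_2 & (Q\omega)(T)\\ \left((Q\omega)(T)\right)^{tr} & \|Q\omega\|^2_{\mathcal{H}^2}\end{pmatrix}, \] and the quadratic form $\Phi(\omega)=T^{4H}\|Q\omega\|^2_{\mathcal{H}^2}-T^{2H}|(Q\omega)(T)|^2$ on $\mathcal{W}^2_p$. Let $B$ be two-dimensional fBm with Hurst parameter $H$ as the coordinate process on $\mathcal{W}^2_p$, and $Y_T=(B_T,A_T)$ with Malliavin derivative $DY_T$. Then (1) $DY_T(DY_T)^*=\gamma(B)$ almost surely; (2) $\Phi=\det\gamma$.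
   Context: $R(s,t)=\frac12(s^{2H}+t^{2H}-|t-s|^{2H})$; $\mathcal{H}$ is its reproducing kernel Hilbert space and $\mathcal{H}^2=\mathcal{H}\otimes\mathbb{R}^2$ (Cameron–Martin space of 2D fBm). $\mathcal{W}^2_p$ is the closure in $p$-variation norm of smooth $\mathbb{R}^2$-valued paths on $[0,T]$ starting at $0$. For $\omega=(\omega^1,\omega^2)\in\mathcal{W}^2_p$, $\tilde\omega=(\omega^2,-\omega^1)$ and $Q\omega=\frac12R(T,\cdot)\tilde\omega(T)-\int_0^T\tilde\omega(t)R(dt,\cdot)\in\mathcal{H}^2$, where $\int_0^T\alpha(t)R(dt,\cdot)$ is the $\mathcal{H}$-limit of $\sum_i\alpha(c_i)[R(t_i,\cdot)-R(t_{i-1},\cdot)]$ as the mesh tends to zero (componentwise). $A_T$ is the a.s. limit of $\frac12\int_0^T((B^1_m)dB^2_m-(B^2_m)dB^1_m)$ over dyadic piecewise linear approximations $B_m$ of $B$. $DY_T:\mathcal{H}^2\to\mathbb{R}^3$ is the Malliavin derivative, given by $DY_Th=(h(T),\langle QB,h\rangle_{\mathcal{H}^2})$, and $(DY_T)^*:\mathbb{R}^3\to\mathcal{H}^2$ its adjoint. *)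

theory Defs
  imports "HOL-Probability.Probability"
begin

definition Rk :: "real \<Rightarrow> real \<Rightarrow> real \<Rightarrow> real" where
  "Rk H s t = (1/2) * (s powr (2*H) + t powr (2*H) - \<bar>t - s\<bar> powr (2*H))"

text \<open>The RKHS \<open>\<H>\<close> of the kernel \<open>R\<close> on \<open>[0,T]\<close> is represented by an abstract real
Hilbert space type \<open>'h\<close>, a realisation map \<open>rl\<close> sending an element to the function on
\<open>[0,T]\<close> it represents, and \<open>k t\<close> the element \<open>R(t,\<cdot>)\<close>.  These data determine
\<open>\<H>\<close> uniquely up to isometry.\<close>

definition is_RKHS ::
  "(real \<Rightarrow> real \<Rightarrow> real) \<Rightarrow> real \<Rightarrow> ('h::{real_inner,complete_space} \<Rightarrow> real \<Rightarrow> real)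
     \<Rightarrow> (real \<Rightarrow> 'h) \<Rightarrow> bool" where
  "is_RKHS R T rl k \<longleftrightarrow>
     (\<forall>s\<in>{0..T}. \<forall>t\<in>{0..T}. rl (k t) s = R t s) \<and>
     (\<forall>t\<in>{0..T}. \<forall>h. inner (k t) h = rl h t) \<and>
     (\<forall>h1 h2. (\<forall>t\<in>{0..T}. rl h1 t = rl h2 t) \<longrightarrow> h1 = h2) \<and>
     closure (span (k ` {0..T})) = UNIV"

definition partition_of :: "real \<Rightarrow> nat \<Rightarrow> (nat \<Rightarrow> real) \<Rightarrow> bool" where
  "partition_of T n t \<longleftrightarrow> n \<ge> 1 \<and> t 0 = 0 \<and> t n = T \<and> (\<forall>i\<in>{1..n}. t (i - 1) < t i)"

definition pvar_sums :: "real \<Rightarrow> real \<Rightarrow> (real \<Rightarrow> real \<times> real) \<Rightarrow> real set" where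
  "pvar_sums p T f = {(\<Sum>i\<in>{1..n}. norm (f (t i) - f (t (i - 1))) powr p) | n t. partition_of T n t}"

definition pvar_norm :: "real \<Rightarrow> real \<Rightarrow> (real \<Rightarrow> real \<times> real) \<Rightarrow> real" where
  "pvar_norm p T f = (Sup (pvar_sums p T f)) powr (1/p)"

definition smooth_path :: "real \<Rightarrow> (real \<Rightarrow> real \<times> real) \<Rightarrow> bool" where
  "smooth_path T f \<longleftrightarrow> (\<exists>D :: nat \<Rightarrow> real \<Rightarrow> real \<times> real. D 0 = f \<and>
      (\<forall>m. \<forall>t\<in>{0..T}. (D m has_vector_derivative D (Suc m) t) (at t within {0..T})))"

definition W2p :: "real \<Rightarrow> real \<Rightarrow> (real \<Rightarrow> real \<times> real) set" where
  "W2p p T = {\<omega>. \<omega> 0 = 0 \<and>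
     (\<exists>f :: nat \<Rightarrow> real \<Rightarrow> real \<times> real.
        (\<forall>n. smooth_path T (f n) \<and> f n 0 = 0 \<and>
             bdd_above (pvar_sums p T (\<lambda>t. \<omega> t - f n t))) \<and>
        (\<lambda>n. pvar_norm p T (\<lambda>t. \<omega> t - f n t)) \<longlonglongrightarrow> 0)}"

definition tagged_partition_of :: "real \<Rightarrow> nat \<Rightarrow> (nat \<Rightarrow> real) \<Rightarrow> (nat \<Rightarrow> real) \<Rightarrow> bool" where
  "tagged_partition_of T n t c \<longleftrightarrow> partition_of T n t \<and> (\<forall>i\<in>{1..n}. t (i - 1) \<le> c i \<and> c i \<le> t i)"

definition mesh :: "nat \<Rightarrow> (nat \<Rightarrow> real) \<Rightarrow> real" where
  "mesh n t = Max ((\<lambda>i. t i - t (i - 1)) ` {1..n})"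

definition RS_sum :: "(real \<Rightarrow> 'h::real_vector) \<Rightarrow> (real \<Rightarrow> real) \<Rightarrow> nat \<Rightarrow> (nat \<Rightarrow> real) \<Rightarrow> (nat \<Rightarrow> real) \<Rightarrow> 'h" where
  "RS_sum k \<alpha> n t c = (\<Sum>i\<in>{1..n}. \<alpha> (c i) *\<^sub>R (k (t i) - k (t (i - 1))))"

definition RS_has_integral :: "real \<Rightarrow> (real \<Rightarrow> 'h::real_normed_vector) \<Rightarrow> (real \<Rightarrow> real) \<Rightarrow> 'h \<Rightarrow> bool" where
  "RS_has_integral T k \<alpha> I \<longleftrightarrow> (\<forall>\<epsilon>>0. \<exists>\<delta>>0. \<forall>n t c.
      tagged_partition_of T n t c \<and> mesh n t < \<delta> \<longrightarrow> norm (RS_sum k \<alpha> n t c - I) < \<epsilon>)"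

definition RS_integral :: "real \<Rightarrow> (real \<Rightarrow> 'h::real_normed_vector) \<Rightarrow> (real \<Rightarrow> real) \<Rightarrow> 'h" where
  "RS_integral T k \<alpha> = (THE I. RS_has_integral T k \<alpha> I)"

definition tilde :: "(real \<Rightarrow> real \<times> real) \<Rightarrow> real \<Rightarrow> real \<times> real" where
  "tilde \<omega> t = (snd (\<omega> t), - fst (\<omega> t))"

definition Qmap :: "real \<Rightarrow> (real \<Rightarrow> 'h::real_normed_vector) \<Rightarrow> (real \<Rightarrow> real \<times> real) \<Rightarrow> 'h \<times> 'h" where
  "Qmap T k \<omega> =
     ((1/2 * fst (tilde \<omega> T)) *\<^sub>R k T - RS_integral T k (\<lambda>t. fst (tilde \<omega> t)),
      (1/2 * snd (tilde \<omega> T)) *\<^sub>R k T - RS_integral T k (\<lambda>t. snd (tilde \<omega> t)))"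

definition ev2 :: "('h \<Rightarrow> real \<Rightarrow> real) \<Rightarrow> 'h \<times> 'h \<Rightarrow> real \<Rightarrow> real \<times> real" where
  "ev2 rl h s = (rl (fst h) s, rl (snd h) s)"

definition gamma_mat :: "real \<Rightarrow> real \<Rightarrow> ('h::real_inner \<Rightarrow> real \<Rightarrow> real) \<Rightarrow> (real \<Rightarrow> 'h)
     \<Rightarrow> (real \<Rightarrow> real \<times> real) \<Rightarrow> real^3^3" where
  "gamma_mat H T rl k \<omega> =
     (let q = Qmap T k \<omega>; v = ev2 rl q T in
      vector [vector [T powr (2*H), 0, fst v],
              vector [0, T powr (2*H), snd v],
              vector [fst v, snd v, (norm q)\<^sup>2]])"

definition Phi :: "real \<Rightarrow> real \<Rightarrow> ('h::real_inner \<Rightarrow> real \<Rightarrow> real) \<Rightarrow> (real \<Rightarrow> 'h)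
     \<Rightarrow> (real \<Rightarrow> real \<times> real) \<Rightarrow> real" where
  "Phi H T rl k \<omega> = T powr (4*H) * (norm (Qmap T k \<omega>))\<^sup>2 - T powr (2*H) * (norm (ev2 rl (Qmap T k \<omega>) T))\<^sup>2"

text \<open>Malliavin derivative of \<open>Y\<^sub>T = (B\<^sub>T, A\<^sub>T)\<close> at the path \<open>\<omega>\<close>, as given in the paper:
  \<open>DY\<^sub>T h = (h(T), \<langle>QB, h\<rangle>)\<close>.\<close>
definition DY :: "real \<Rightarrow> ('h::real_inner \<Rightarrow> real \<Rightarrow> real) \<Rightarrow> (real \<Rightarrow> 'h)
     \<Rightarrow> (real \<Rightarrow> real \<times> real) \<Rightarrow> 'h \<times> 'h \<Rightarrow> real^3" where
  "DY T rl k \<omega> h = vector [rl (fst h) T, rl (snd h) T, inner (Qmap T k \<omega>) h]"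

text \<open>\<open>M\<close> is a probability measure on \<open>W\<^sup>2\<^sub>p\<close> under which the coordinate process is a centred
Gaussian process with covariance \<open>E[B\<^sup>i\<^sub>s B\<^sup>j\<^sub>t] = \<delta>\<^sub>i\<^sub>j R(s,t)\<close>: every finite linear combination of
coordinates has the centred normal characteristic function with the corresponding variance.\<close>
definition is_fBm2_law :: "real \<Rightarrow> real \<Rightarrow> real \<Rightarrow> (real \<Rightarrow> real \<times> real) measure \<Rightarrow> bool" where
  "is_fBm2_law H p T M \<longleftrightarrow> prob_space M \<and> space M = W2p p T \<and>
     (\<forall>t\<in>{0..T}. (\<lambda>\<omega>. fst (\<omega> t)) \<in> borel_measurable M \<and> (\<lambda>\<omega>. snd (\<omega> t)) \<in> borel_measurable M) \<and>
     (\<forall>n (s::nat \<Rightarrow> real) (a::nat \<Rightarrow> real) (b::nat \<Rightarrow> real). (\<forall>i<n. s i \<in> {0..T}) \<longrightarrow>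
        (\<forall>\<theta>. char (distr M borel (\<lambda>\<omega>. \<Sum>i<n. a i * fst (\<omega> (s i)) + b i * snd (\<omega> (s i)))) \<theta>
             = complex_of_real (exp (- ((\<Sum>i<n. \<Sum>j<n. (a i * a j + b i * b j) * Rk H (s i) (s j)) * \<theta>\<^sup>2) / 2))))"

end

theory Submission
  imports Defs
begin

text \<open>Both identities are algebraic and hold for every path. By the reproducing property,
  evaluation at \<open>T\<close> is the functional \<open>\<langle>R(T,\<cdot>), \<cdot>\<rangle>\<close>, so \<open>DY\<^sub>T\<close> is the map
  \<open>h \<mapsto> (\<langle>(R(T,\<cdot>),0),h\<rangle>, \<langle>(0,R(T,\<cdot>)),h\<rangle>, \<langle>QB,h\<rangle>)\<close>, and \<open>DY\<^sub>T(DY\<^sub>T)\<^sup>*\<close> is the Gram matrix of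
  these three vectors of \<open>\<H>\<^sup>2\<close>; since \<open>\<parallel>R(T,\<cdot>)\<parallel>\<^sup>2 = R(T,T) = T\<^sup>2\<^sup>H\<close> this Gram matrix is \<open>\<gamma>(B)\<close>.
  Expanding \<open>det \<gamma>\<close> along its last row gives \<open>\<Phi>\<close>.\<close>

lemma is_RKHS_eval_eq_inner:
  assumes "is_RKHS R T rl k" and "t \<in> {0..T}"
  shows "rl h t = inner (k t) h"
  using assms unfolding is_RKHS_def by auto

lemma is_RKHS_inner_kernel:
  assumes "is_RKHS R T rl k" and "s \<in> {0..T}" and "t \<in> {0..T}"
  shows "inner (k s) (k t) = R t s"
  using assms unfolding is_RKHS_def by auto

lemma Rk_diag: "Rk H t t = t powr (2*H)"
  by (simp add: Rk_def)

lemma adjoint_DY: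
  assumes "is_RKHS R T rl k" and "T \<ge> 0"
  shows "adjoint (DY T rl k \<omega>) =
    (\<lambda>y. y$1 *\<^sub>R (k T, 0) + y$2 *\<^sub>R (0, k T) + y$3 *\<^sub>R Qmap T k \<omega>)"
proof (rule adjoint_unique, intro allI)
  fix x :: "'a \<times> 'a" and y :: "real^3"
  have eval: "rl h T = inner (k T) h" for h
    using is_RKHS_eval_eq_inner[OF assms(1)] assms(2) by simp
  show "inner (DY T rl k \<omega> x) y =
    inner x (y$1 *\<^sub>R (k T, 0) + y$2 *\<^sub>R (0, k T) + y$3 *\<^sub>R Qmap T k \<omega>)"
    unfolding DY_def
    by (cases x) (simp add: inner_vec_def sum_3 eval inner_add_right inner_Pair
        algebra_simps inner_commute)
qed

lemma DY_adjoint_eq_gamma_mat: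
  assumes "is_RKHS (Rk H) T rl k" and "T \<ge> 0"
  shows "matrix (DY T rl k \<omega> \<circ> adjoint (DY T rl k \<omega>)) = gamma_mat H T rl k \<omega>"
proof -
  have eval: "rl h T = inner (k T) h" for h
    using is_RKHS_eval_eq_inner[OF assms(1)] assms(2) by simp
  have norm_kT: "inner (k T) (k T) = T powr (2*H)"
    using is_RKHS_inner_kernel[OF assms(1)] assms(2) by (simp add: Rk_diag)
  obtain q1 q2 where Q: "Qmap T k \<omega> = (q1, q2)"
    by fastforce
  show ?thesis
    unfolding adjoint_DY[OF assms] gamma_mat_def Let_def Q
    by (simp add: matrix_def vec_eq_iff forall_3 DY_def axis_def eval ev2_def Q
        inner_Pair norm_kT inner_commute power2_norm_eq_inner zero_prod_def)
qed

lemma Phi_eq_det_gamma_mat: "Phi H T rl k \<omega> = det (gamma_mat H T rl k \<omega>)"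
proof -
  have "T powr (4*H) = T powr (2*H) * T powr (2*H)"
    using powr_add[of T "2*H" "2*H"] by simp
  then show ?thesis
    unfolding Phi_def gamma_mat_def Let_def
    by (simp only:) (simp add: det_3 ev2_def norm_Pair power2_eq_square algebra_simps)
qed

theorem proposition3p13:
  fixes H T p :: real
    and rl :: "'h::{real_inner,complete_space} \<Rightarrow> real \<Rightarrow> real"
    and k :: "real \<Rightarrow> 'h"
    and M :: "(real \<Rightarrow> real \<times> real) measure"
  assumes "1/3 < H" and "H < 1/2" and "T > 0"
    and "1/H < p" and "p < 1/(1 - 2*H)"
    and "is_RKHS (Rk H) T rl k"
    and "is_fBm2_law H p T M"
  shows "(AE \<omega> in M. matrix (DY T rl k \<omega> \<circ> adjoint (DY T rl k \<omega>)) = gamma_mat H T rl k \<omega>)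
       \<and> (\<forall>\<omega>\<in>W2p p T. Phi H T rl k \<omega> = det (gamma_mat H T rl k \<omega>))"
proof
  show "AE \<omega> in M. matrix (DY T rl k \<omega> \<circ> adjoint (DY T rl k \<omega>)) = gamma_mat H T rl k \<omega>"
    using DY_adjoint_eq_gamma_mat[OF assms(6)] assms(3) by simp
  show "\<forall>\<omega>\<in>W2p p T. Phi H T rl k \<omega> = det (gamma_mat H T rl k \<omega>)"
    by (simp add: Phi_eq_det_gamma_mat)
qed

end
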